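(* Let $\Lambda\subset\mathbb Z^n$ be a sublattice with a basis $S=\{v_1,\ldots,v_n\}$ which is non-acute. Let $k_1,\ldots,k_n$ be the unique integers with $W:=\sum_{i=1}^n v_i=\sum_{i=1}^n k_ie_i$, and let $R_o=\{i : k_i\equiv 1 \pmod 2\}$. If $$\sum_{i=1}^n k_i^2>4n-3|R_o|,$$ then $\Lambda$ is not cubiquitous.
   Context: $\mathbb Z^n$ carries the standard dot product $\langle\cdot,\cdot\rangle$ with standard basis $e_1,\ldots,e_n$. A set $S=\{v_1,\ldots,v_n\}\subset\mathbb Z^n$ is non-acute if $a_i:=\langle v_i,v_i\rangle\ge 1$ for all $i$, $\langle v_i,v_j\rangle\le 0$ for all $i\ne j$, and $a_i\ge -\sum_{j\ne i}\langle v_j,v_i\rangle$ for all $i$. A full-rank sublattice $\Lambda\subset\mathbb Z^n$ is cubiquitous if $\Lambda\cap(x+\{0,1\}^n)\ne\emptyset$ for every $x\in\mathbb Z^n$. *)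

theory Defs
  imports "HOL-Analysis.Analysis"
begin

text \<open>Integer vectors in Z^n are modelled as int^'n for a finite index type 'n (n = CARD('n)).
  A family of n vectors is a function v :: 'n \<Rightarrow> int^'n.\<close>

definition idot :: "int^'n \<Rightarrow> int^'n \<Rightarrow> int" where
  "idot x y = (\<Sum>i\<in>UNIV. x$i * y$i)"

definition non_acute :: "('n::finite \<Rightarrow> int^'n) \<Rightarrow> bool" where
  "non_acute v \<longleftrightarrow>
     (\<forall>i. idot (v i) (v i) \<ge> 1) \<and>
     (\<forall>i j. i \<noteq> j \<longrightarrow> idot (v i) (v j) \<le> 0) \<and>
     (\<forall>i. idot (v i) (v i) \<ge> - (\<Sum>j\<in>UNIV - {i}. idot (v j) (v i)))"

definition int_span :: "('n::finite \<Rightarrow> int^'n) \<Rightarrow> (int^'n) set" where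
  "int_span v = {x. \<exists>c::'n \<Rightarrow> int. x = (\<Sum>i\<in>UNIV. c i *s v i)}"

definition int_indep :: "('n::finite \<Rightarrow> int^'n) \<Rightarrow> bool" where
  "int_indep v \<longleftrightarrow> (\<forall>c::'n \<Rightarrow> int. (\<Sum>i\<in>UNIV. c i *s v i) = 0 \<longrightarrow> (\<forall>i. c i = 0))"

definition cubiquitous :: "(int^'n::finite) set \<Rightarrow> bool" where
  "cubiquitous L \<longleftrightarrow> (\<forall>x::int^'n. \<exists>y\<in>L. \<forall>i. y$i - x$i \<in> {0, 1})"

end

theory Submission
  imports Defs
begin

text \<open>Let \<open>W = \<Sum>\<^sub>i v\<^sub>i\<close>. For a non-acute family the Gram matrix is symmetric, non-positive off the
  diagonal and has non-negative row sums; for integer coefficients this gives \<open>\<langle>y,y\<rangle> \<ge> \<langle>y,W\<rangle>\<close>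
  for every lattice vector \<open>y\<close>, i.e. \<open>|2y - W|\<^sup>2 \<ge> |W|\<^sup>2\<close>. But a lattice point \<open>y\<close> in the cube
  with corner \<open>\<lfloor>W/2\<rfloor>\<close> has \<open>2y\<^sub>i - W\<^sub>i = \<plusminus>1\<close> where \<open>W\<^sub>i\<close> is odd and \<open>2y\<^sub>i - W\<^sub>i \<in> {0, 2}\<close>
  where it is even, so \<open>|2y - W|\<^sup>2 \<le> 4n - 3|R\<^sub>o|\<close>.\<close>

lemma idot_commute: "idot x y = idot y x"
  unfolding idot_def by (simp add: mult.commute)

lemma idot_scaleR_left: "idot (c *s x) y = c * idot x y"
  unfolding idot_def by (simp add: sum_distrib_left mult.assoc)

lemma idot_scaleR_right: "idot x (c *s y) = c * idot x y"
  using idot_scaleR_left[of c y x] by (simp add: idot_commute)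

lemma idot_sum_left:
  assumes "finite A"
  shows "idot (\<Sum>i\<in>A. f i) y = (\<Sum>i\<in>A. idot (f i) y)"
  using assms by induction (simp_all add: idot_def sum.distrib algebra_simps)

lemma idot_sum_right:
  assumes "finite A"
  shows "idot x (\<Sum>i\<in>A. f i) = (\<Sum>i\<in>A. idot x (f i))"
  using idot_sum_left[OF assms] by (simp add: idot_commute)

lemma idot_lincomb_lincomb:
  fixes v :: "'n::finite \<Rightarrow> int^'m"
  shows "idot (\<Sum>i\<in>UNIV. c i *s v i) (\<Sum>j\<in>UNIV. d j *s v j)
       = (\<Sum>i\<in>UNIV. \<Sum>j\<in>UNIV. idot (v i) (v j) * c i * d j)"
proof -
  have "idot (c i *s v i) (d j *s v j) = idot (v i) (v j) * c i * d j" for i j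
    by (simp add: idot_scaleR_left idot_scaleR_right)
  then show ?thesis
    by (simp add: idot_sum_left idot_sum_right) (rule sum.swap)
qed

lemma int_quadratic_form_ge_linear:
  fixes g :: "'a::finite \<Rightarrow> 'a \<Rightarrow> int" and c :: "'a \<Rightarrow> int"
  assumes sym: "\<And>i j. g i j = g j i"
    and off_diag: "\<And>i j. i \<noteq> j \<Longrightarrow> g i j \<le> 0"
    and row_sums: "\<And>i. (\<Sum>j\<in>UNIV. g i j) \<ge> 0"
  shows "(\<Sum>i\<in>UNIV. \<Sum>j\<in>UNIV. g i j * c i * c j) \<ge> (\<Sum>i\<in>UNIV. \<Sum>j\<in>UNIV. g i j * c i)"
proof -
  have swap: "(\<Sum>i\<in>UNIV. \<Sum>j\<in>UNIV. g i j * c j ^ 2) = (\<Sum>i\<in>UNIV. \<Sum>j\<in>UNIV. g i j * c i ^ 2)"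
    by (subst sum.swap) (simp add: sym)
  \<comment> \<open>\<open>2 c\<^sub>i c\<^sub>j = c\<^sub>i\<^sup>2 + c\<^sub>j\<^sup>2 - (c\<^sub>i - c\<^sub>j)\<^sup>2\<close>, and \<open>c\<^sub>i\<^sup>2 \<ge> c\<^sub>i\<close> for integers.\<close>
  have "2 * ((\<Sum>i\<in>UNIV. \<Sum>j\<in>UNIV. g i j * c i * c j) - (\<Sum>i\<in>UNIV. \<Sum>j\<in>UNIV. g i j * c i))
      = (\<Sum>i\<in>UNIV. \<Sum>j\<in>UNIV. - g i j * (c i - c j)^2 + g i j * c i ^ 2 + g i j * c j ^ 2 - 2 * g i j * c i)"
    by (simp add: sum_distrib_left sum_subtractf[symmetric] power2_eq_square algebra_simps)
  also have "\<dots> = (\<Sum>i\<in>UNIV. \<Sum>j\<in>UNIV. - g i j * (c i - c j)^2)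
      + 2 * (\<Sum>i\<in>UNIV. (\<Sum>j\<in>UNIV. g i j) * (c i ^ 2 - c i))"
    using swap by (simp add: sum.distrib sum_subtractf sum_negf sum_distrib_left sum_distrib_right algebra_simps)
  also have "\<dots> \<ge> 0"
  proof -
    have "- g i j * (c i - c j)^2 \<ge> 0" for i j
      by (cases "i = j") (simp_all add: off_diag mult_nonpos_nonneg)
    moreover have "c i ^ 2 - c i \<ge> 0" for i
      by (cases "c i \<le> 0") (simp_all add: power2_eq_square mult_nonpos_nonpos mult_le_cancel_left1)
    then have "(\<Sum>j\<in>UNIV. g i j) * (c i ^ 2 - c i) \<ge> 0" for i
      using row_sums by simp
    ultimately show ?thesis
      by (simp add: sum_nonneg)
  qed
  finally show ?thesis by simp
qed

lemma non_acute_idot_ge_idot_sum: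
  fixes v :: "'n::finite \<Rightarrow> int^'n"
  assumes nonac: "non_acute v" and y: "y \<in> int_span v"
  shows "idot y y \<ge> idot y (\<Sum>j\<in>UNIV. v j)"
proof -
  obtain c where y_eq: "y = (\<Sum>i\<in>UNIV. c i *s v i)"
    using y unfolding int_span_def by blast
  define g where "g i j = idot (v i) (v j)" for i j
  have sym: "g i j = g j i" for i j
    unfolding g_def by (rule idot_commute)
  have off_diag: "g i j \<le> 0" if "i \<noteq> j" for i j
    using nonac that unfolding non_acute_def g_def by blast
  have row_sums: "(\<Sum>j\<in>UNIV. g i j) \<ge> 0" for i
  proof -
    have "g i i \<ge> - (\<Sum>j\<in>UNIV - {i}. g j i)"
      using nonac unfolding non_acute_def g_def by blast
    moreover have "(\<Sum>j\<in>UNIV. g i j) = g i i + (\<Sum>j\<in>UNIV - {i}. g j i)"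
      by (simp add: sum.remove sym)
    ultimately show ?thesis
      by linarith
  qed
  have "(\<Sum>i\<in>UNIV. \<Sum>j\<in>UNIV. g i j * c i * c j) \<ge> (\<Sum>i\<in>UNIV. \<Sum>j\<in>UNIV. g i j * c i)"
    using sym off_diag row_sums by (rule int_quadratic_form_ge_linear)
  moreover have "(\<Sum>j\<in>UNIV. v j) = (\<Sum>j\<in>UNIV. 1 *s v j)"
    by simp
  ultimately show ?thesis
    unfolding y_eq by (simp only: idot_lincomb_lincomb g_def mult_1_right)
qed

lemma sum_sq_double_diff:
  "(\<Sum>i\<in>UNIV. (2 * y$i - w$i)^2) = 4 * (idot y y - idot y w) + (\<Sum>i\<in>UNIV. (w$i)^2)"
  unfolding idot_def
  by (simp add: power2_eq_square algebra_simps sum.distrib sum_subtractf sum_distrib_left)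

lemma sq_double_diff_half_le:
  fixes y k :: int
  assumes "y - k div 2 \<in> {0, 1}"
  shows "(2 * y - k)^2 \<le> (if odd k then 1 else 4)"
proof -
  define d where "d = y - k div 2"
  have d: "d = 0 \<or> d = 1"
    using assms unfolding d_def by auto
  have r: "k mod 2 = 0 \<or> k mod 2 = 1"
    by auto
  have "2 * y - k = 2 * d - k mod 2"
    unfolding d_def by (simp add: algebra_simps minus_mod_eq_mult_div[symmetric])
  moreover have "odd k \<longleftrightarrow> k mod 2 = 1"
    by (simp add: odd_iff_mod_2_eq_one)
  ultimately show ?thesis
    using d r by auto
qed

lemma sum_sq_double_diff_cube_le:
  fixes y w :: "int^'n::finite"
  assumes "\<And>i. y$i - w$i div 2 \<in> {0, 1}"
  shows "(\<Sum>i\<in>UNIV. (2 * y$i - w$i)^2) \<le> 4 * int CARD('n) - 3 * int (card {i. odd (w$i)})"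
proof -
  have "(2 * y$i - w$i)^2 \<le> 4 - 3 * (if odd (w$i) then 1 else 0)" for i
    using sq_double_diff_half_le[OF assms[of i]] by (cases "odd (w$i)") simp_all
  then have "(\<Sum>i\<in>UNIV. (2 * y$i - w$i)^2) \<le> (\<Sum>i\<in>UNIV. 4 - 3 * (if odd (w$i) then 1 else 0))"
    by (rule sum_mono)
  also have "\<dots> = 4 * int CARD('n) - 3 * int (card {i. odd (w$i)})"
    by (simp add: sum_subtractf sum_distrib_left[symmetric] sum.If_cases)
  finally show ?thesis .
qed

theorem proposition1p4:
  fixes v :: "'n::finite \<Rightarrow> int^'n"
  assumes basis: "int_indep v"
    and nonac: "non_acute v"
    and big: "(\<Sum>i\<in>UNIV. ((\<Sum>j\<in>UNIV. v j) $ i)^2)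
              > 4 * int CARD('n) - 3 * int (card {i. odd ((\<Sum>j\<in>UNIV. v j) $ i)})"
  shows "\<not> cubiquitous (int_span v)"
proof
  assume "cubiquitous (int_span v)"
  define W where "W = (\<Sum>j\<in>UNIV. v j)"
  obtain y where y: "y \<in> int_span v" and "\<forall>i. y$i - (\<chi> i. W$i div 2)$i \<in> {0, 1}"
    using \<open>cubiquitous (int_span v)\<close> unfolding cubiquitous_def by blast
  then have in_cube: "\<And>i. y$i - W$i div 2 \<in> {0, 1}"
    by simp
  have "(\<Sum>i\<in>UNIV. (W$i)^2) \<le> (\<Sum>i\<in>UNIV. (2 * y$i - W$i)^2)"
    using non_acute_idot_ge_idot_sum[OF nonac y] unfolding sum_sq_double_diff W_def by simp
  also have "\<dots> \<le> 4 * int CARD('n) - 3 * int (card {i. odd (W$i)})"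
    using in_cube by (rule sum_sq_double_diff_cube_le)
  finally show False
    using big unfolding W_def by simp
qed

end
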